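(* In the algorithm described in the context, only four types of messages are used, namely $\textsc{write0}(v)$, $\textsc{write1}(v)$, $\textsc{read}()$ and $\textsc{proceed}()$, and no message carries control information beyond its type. Moreover, a read operation requires $O(n)$ messages and a write operation requires $O(n^2)$ messages.
   Context: Model. There are $n$ asynchronous processes $p_1,\dots,p_n$, of which up to $t<n/2$ may crash. Every ordered pair of processes is connected by a reliable, asynchronous, not necessarily FIFO channel. One process $p_w$ is the single writer; the initial register value is $v_0$. The notation $\textsc{write}(b,v)$ stands for $\textsc{write0}(v)$ if $b=0$ and for $\textsc{write1}(v)$ if $b=1$. Local variables of $p_i$. These are: an array $history_i$ with $history_i[0]=v_0$; an integer array $w\_sync_i[1..n]$, initially all $0$; and an integer array $r\_sync_i[1..n]$, initially all $0$. $\mathsf{write}(v)$, executed by $p_w$: (1) $wsn\gets w\_sync_w[w]+1$; $w\_sync_w[w]\gets wsn$; $history_w[wsn]\gets v$; $b\gets wsn\bmod 2$. (2) For each $j$ with $w\_sync_w[j]=wsn-1$, send $\textsc{write}(b,v)$ to $p_j$. (3) Wait until at least $n-t$ indices $j$ satisfy $w\_sync_w[j]=wsn$. (4) Return. $\mathsf{read}()$, executed by $p_i$: (5) $r\_sync_i[i]\gets r\_sync_i[i]+1$, and let $rsn$ denote this new value. (6) Send $\textsc{read}()$ to every $p_j$ with $j\ne i$. (7) Wait until at least $n-t$ indices $j$ satisfy $r\_sync_i[j]=rsn$. (8) $sn\gets w\_sync_i[i]$. (9) Wait until at least $n-t$ indices $j$ satisfy $w\_sync_i[j]\ge sn$. (10)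 Return $history_i[sn]$. On receipt of $\textsc{write}(b,v)$ from $p_j$, process $p_i$ executes: (i) Wait until $b=(w\_sync_i[j]+1)\bmod 2$. (ii) $wsn\gets w\_sync_i[j]+1$. (iii) If $wsn=w\_sync_i[i]+1$: set $w\_sync_i[i]\gets wsn$ and $history_i[wsn]\gets v$, then for each $\ell$ with $w\_sync_i[\ell]=wsn-1$, send $\textsc{write}(wsn\bmod 2,v)$ to $p_\ell$. (iv) Otherwise, if $wsn<w\_sync_i[i]$, send $\textsc{write}((wsn+1)\bmod 2, history_i[wsn+1])$ to $p_j$. (v) $w\_sync_i[j]\gets wsn$. On receipt of $\textsc{read}()$ from $p_j$, process $p_i$ executes: (i) $sn\gets w\_sync_i[i]$. (ii) Wait until $w\_sync_i[j]\ge sn$. (iii) Send $\textsc{proceed}()$ to $p_j$. On receipt of $\textsc{proceed}()$ from $p_j$, process $p_i$ sets $r\_sync_i[j]\gets r\_sync_i[j]+1$. *)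

theory Defs
  imports Main "HOL-Library.Multiset"
begin

datatype 'v msg = Write0 'v | Write1 'v | Read | Proceed

text \<open>WRITE(b,v): WRITE0(v) if b = 0, WRITE1(v) if b = 1; here b is given as a
sequence number whose parity is taken (b = wsn mod 2).\<close>
definition wmsg :: "nat \<Rightarrow> 'v \<Rightarrow> 'v msg" where
  "wmsg k v = (if k mod 2 = 0 then Write0 v else Write1 v)"

text \<open>Ghost accounting tags (NOT part of the message content, never read by the
algorithm): a WRITE message is attributed to the write operation with the
sequence number it conveys; READ messages, and the PROCEED message answering
them, are attributed to the read operation (reader, read sequence number).\<close>
datatype tag = WTag nat | RTag nat nat

datatype phase = Idle | WWait nat | RWait1 nat | RWait2 nat

record 'v lstate =
  hist   :: "nat \<Rightarrow> 'v option"
  wsync  :: "nat \<Rightarrow> nat"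
  rsync  :: "nat \<Rightarrow> nat"
  phase  :: phase
  pend   :: "(nat \<times> nat \<times> tag) multiset"  \<comment> \<open>pending READ handlers: (sender j, sn, ghost tag)\<close>
  crashed :: bool

text \<open>Network entries: (message, ghost tag, source, destination).  The network is
a multiset (reliable, non-FIFO); \<open>sent\<close> is a ghost log of every message ever sent.\<close>
type_synonym 'v netmsg = "'v msg \<times> tag \<times> nat \<times> nat"

record 'v gstate =
  procs :: "nat \<Rightarrow> 'v lstate"
  net   :: "'v netmsg multiset"
  sent  :: "'v netmsg list"

definition send :: "'v msg \<Rightarrow> tag \<Rightarrow> nat \<Rightarrow> nat \<Rightarrow> 'v gstate \<Rightarrow> 'v gstate" where
  "send m tg s d g = g\<lparr>net := net g + {#(m, tg, s, d)#}, sent := sent g @ [(m, tg, s, d)]\<rparr>"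

definition send_all :: "'v msg \<Rightarrow> tag \<Rightarrow> nat \<Rightarrow> nat list \<Rightarrow> 'v gstate \<Rightarrow> 'v gstate" where
  "send_all m tg s ds g = fold (\<lambda>d. send m tg s d) ds g"

definition upd_loc :: "nat \<Rightarrow> ('v lstate \<Rightarrow> 'v lstate) \<Rightarrow> 'v gstate \<Rightarrow> 'v gstate" where
  "upd_loc i f g = g\<lparr>procs := (procs g)(i := f (procs g i))\<rparr>"

definition init_loc :: "'v \<Rightarrow> 'v lstate" where
  "init_loc v0 = \<lparr>hist = [0 \<mapsto> v0], wsync = (\<lambda>_. 0), rsync = (\<lambda>_. 0),
                  phase = Idle, pend = {#}, crashed = False\<rparr>"

definition init :: "'v \<Rightarrow> 'v gstate" where
  "init v0 = \<lparr>procs = (\<lambda>_. init_loc v0), net = {#}, sent = []\<rparr>"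

definition bit_of :: "'v msg \<Rightarrow> nat" where
  "bit_of m = (case m of Write1 _ \<Rightarrow> 1 | _ \<Rightarrow> 0)"

text \<open>Handler for a WRITE(b,v) message from j at process i, once its wait
condition (i) holds: steps (ii)-(v).\<close>
definition recv_write :: "nat \<Rightarrow> nat \<Rightarrow> nat \<Rightarrow> 'v \<Rightarrow> 'v gstate \<Rightarrow> 'v gstate" where
  "recv_write n i j v g =
    (let L = procs g i; wsn = wsync L j + 1;
         g1 = (if wsn = wsync L i + 1 then
                 (let g' = upd_loc i (\<lambda>l. l\<lparr>wsync := (wsync l)(i := wsn),
                                             hist := (hist l)(wsn \<mapsto> v)\<rparr>) g;
                      L' = procs g' i
                  in send_all (wmsg wsn v) (WTag wsn) i
                       (filter (\<lambda>l. wsync L' l = wsn - 1) [0..<n]) g')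
               else if wsn < wsync L i then
                 send (wmsg (wsn + 1) (the (hist L (wsn + 1)))) (WTag (wsn + 1)) i j g
               else g)
     in upd_loc i (\<lambda>l. l\<lparr>wsync := (wsync l)(j := wsn)\<rparr>) g1)"

text \<open>One atomic step of the system with n processes, at most t crashes,
writer w.  Parameter v is the value argument of a write invocation.\<close>
inductive step :: "nat \<Rightarrow> nat \<Rightarrow> nat \<Rightarrow> 'v gstate \<Rightarrow> 'v gstate \<Rightarrow> bool"
  for n t w where
  crash:
    "\<lbrakk> i < n; \<not> crashed (procs g i); card {k. k < n \<and> crashed (procs g k)} < t \<rbrakk>
     \<Longrightarrow> step n t w g (upd_loc i (\<lambda>l. l\<lparr>crashed := True\<rparr>) g)"
| write_invoke:
    "\<lbrakk> \<not> crashed (procs g w); phase (procs g w) = Idle; wsn = wsync (procs g w) w + 1;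
       g' = upd_loc w (\<lambda>l. l\<lparr>wsync := (wsync l)(w := wsn), hist := (hist l)(wsn \<mapsto> v),
                              phase := WWait wsn\<rparr>) g \<rbrakk>
     \<Longrightarrow> step n t w g (send_all (wmsg wsn v) (WTag wsn) w
                         (filter (\<lambda>j. wsync (procs g' w) j = wsn - 1) [0..<n]) g')"
| write_return:
    "\<lbrakk> \<not> crashed (procs g w); phase (procs g w) = WWait wsn;
       card {j. j < n \<and> wsync (procs g w) j = wsn} \<ge> n - t \<rbrakk>
     \<Longrightarrow> step n t w g (upd_loc w (\<lambda>l. l\<lparr>phase := Idle\<rparr>) g)"
| read_invoke:
    "\<lbrakk> i < n; \<not> crashed (procs g i); phase (procs g i) = Idle; rsn = rsync (procs g i) i + 1 \<rbrakk>
     \<Longrightarrow> step n t w g (send_all Read (RTag i rsn) i (filter (\<lambda>j. j \<noteq> i) [0..<n])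
                (upd_loc i (\<lambda>l. l\<lparr>rsync := (rsync l)(i := rsn), phase := RWait1 rsn\<rparr>) g))"
| read_mid:
    "\<lbrakk> i < n; \<not> crashed (procs g i); phase (procs g i) = RWait1 rsn;
       card {j. j < n \<and> rsync (procs g i) j = rsn} \<ge> n - t \<rbrakk>
     \<Longrightarrow> step n t w g (upd_loc i (\<lambda>l. l\<lparr>phase := RWait2 (wsync l i)\<rparr>) g)"
| read_return:
    "\<lbrakk> i < n; \<not> crashed (procs g i); phase (procs g i) = RWait2 sn;
       card {j. j < n \<and> wsync (procs g i) j \<ge> sn} \<ge> n - t \<rbrakk>
     \<Longrightarrow> step n t w g (upd_loc i (\<lambda>l. l\<lparr>phase := Idle\<rparr>) g)"
| recv_write_step:
    "\<lbrakk> i < n; \<not> crashed (procs g i); (m, tg, j, i) \<in># net g; m = Write0 v \<or> m = Write1 v;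
       bit_of m = (wsync (procs g i) j + 1) mod 2 \<rbrakk>
     \<Longrightarrow> step n t w g (recv_write n i j v (g\<lparr>net := net g - {#(m, tg, j, i)#}\<rparr>))"
| recv_read:
    "\<lbrakk> i < n; \<not> crashed (procs g i); (Read, tg, j, i) \<in># net g \<rbrakk>
     \<Longrightarrow> step n t w g (upd_loc i (\<lambda>l. l\<lparr>pend := pend l + {#(j, wsync l i, tg)#}\<rparr>)
                        (g\<lparr>net := net g - {#(Read, tg, j, i)#}\<rparr>))"
| read_respond:
    "\<lbrakk> i < n; \<not> crashed (procs g i); (j, sn, tg) \<in># pend (procs g i);
       wsync (procs g i) j \<ge> sn \<rbrakk>
     \<Longrightarrow> step n t w g (send Proceed tg i j
                (upd_loc i (\<lambda>l. l\<lparr>pend := pend l - {#(j, sn, tg)#}\<rparr>) g))"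
| recv_proceed:
    "\<lbrakk> i < n; \<not> crashed (procs g i); (Proceed, tg, j, i) \<in># net g \<rbrakk>
     \<Longrightarrow> step n t w g (upd_loc i (\<lambda>l. l\<lparr>rsync := (rsync l)(j := rsync l j + 1)\<rparr>)
                        (g\<lparr>net := net g - {#(Proceed, tg, j, i)#}\<rparr>))"

definition reachable :: "nat \<Rightarrow> nat \<Rightarrow> nat \<Rightarrow> 'v \<Rightarrow> 'v gstate \<Rightarrow> bool" where
  "reachable n t w v0 g = (step n t w)\<^sup>*\<^sup>* (init v0) g"

definition msgs_of :: "'v gstate \<Rightarrow> tag \<Rightarrow> nat" where
  "msgs_of g tg = length (filter (\<lambda>(m, tg', s, d). tg' = tg) (sent g))"

end

theory Submission
  imports Defs
begin

text \<open>The four message kinds are the constructors of \<open>msg\<close>, so the first claim is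
  immediate; the counts follow from invariants of reachable states.  A read tagged (i, r)
  sends its n - 1 READ messages only once, because r exceeds every earlier read counter of
  p_i, and every PROCEED answers a distinct READ: at most 2n messages.  WRITE messages for
  sequence number k are sent in batches of at most n only when some process raises its own
  w_sync to k, and singly only when some w_sync_x[y] reaches k - 1; with n processes and
  n^2 pairs this gives at most 2n^2 messages.\<close>

lemma send_simps [simp]:
  "procs (send m tg s d g) = procs g"
  "sent (send m tg s d g) = sent g @ [(m, tg, s, d)]"
  "net (send m tg s d g) = net g + {#(m, tg, s, d)#}"
  by (simp_all add: send_def)

lemma send_all_simps [simp]:
  "procs (send_all m tg s ds g) = procs g"
  "sent (send_all m tg s ds g) = sent g @ map (\<lambda>d. (m, tg, s, d)) ds"
  "net (send_all m tg s ds g) = net g + mset (map (\<lambda>d. (m, tg, s, d)) ds)"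
  by (induction ds arbitrary: g) (simp_all add: send_all_def)

lemma upd_loc_simps [simp]:
  "procs (upd_loc i f g) = (procs g)(i := f (procs g i))"
  "sent (upd_loc i f g) = sent g"
  "net (upd_loc i f g) = net g"
  by (simp_all add: upd_loc_def)

lemma wmsg_neq [simp]:
  "wmsg k v \<noteq> Read" "wmsg k v \<noteq> Proceed" "Read \<noteq> wmsg k v" "Proceed \<noteq> wmsg k v"
  by (simp_all add: wmsg_def)

text \<open>The messages sent by steps (iii) and (iv) of the WRITE handler at i for a message
  from j, as a function of the local state of i before the update.\<close>
definition write_forwards :: "nat \<Rightarrow> nat \<Rightarrow> nat \<Rightarrow> 'v \<Rightarrow> 'v lstate \<Rightarrow> 'v netmsg list" where
  "write_forwards n i j v L =
     (if wsync L j = wsync L i then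
        map (\<lambda>l. (wmsg (wsync L j + 1) v, WTag (wsync L j + 1), i, l))
          (filter (\<lambda>l. ((wsync L)(i := wsync L j + 1)) l = wsync L j) [0..<n])
      else if wsync L j + 1 < wsync L i then
        [(wmsg (wsync L j + 2) (the (hist L (wsync L j + 2))), WTag (wsync L j + 2), i, j)]
      else [])"

lemma recv_write_sent:
  "sent (recv_write n i j v g) = sent g @ write_forwards n i j v (procs g i)"
  by (auto simp: recv_write_def write_forwards_def Let_def)

lemma recv_write_net:
  "net (recv_write n i j v g) = net g + mset (write_forwards n i j v (procs g i))"
  by (auto simp: recv_write_def write_forwards_def Let_def)

lemma recv_write_procs:
  "wsync (procs (recv_write n i j v g) x) =
     (if x \<noteq> i then wsync (procs g x)
      else if wsync (procs g i) j = wsync (procs g i) i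
      then (wsync (procs g i))(i := wsync (procs g i) j + 1, j := wsync (procs g i) j + 1)
      else (wsync (procs g i))(j := wsync (procs g i) j + 1))"
  "rsync (procs (recv_write n i j v g) x) = rsync (procs g x)"
  "pend (procs (recv_write n i j v g) x) = pend (procs g x)"
  by (auto simp: recv_write_def Let_def)

lemma write_forwards_shape:
  "x \<in> set (write_forwards n i j v L) \<Longrightarrow> \<exists>k u d. x = (wmsg k u, WTag k, i, d)"
  by (auto simp: write_forwards_def split: if_splits)

lemma recv_write_net_cases:
  "x \<in># net (recv_write n i j v g) \<Longrightarrow> x \<in># net g \<or> (\<exists>k u d. x = (wmsg k u, WTag k, i, d))"
  unfolding recv_write_net by (auto dest: write_forwards_shape)

lemma step_sync_mono:
  "step n t w g g' \<Longrightarrow>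
     wsync (procs g x) y \<le> wsync (procs g' x) y \<and> rsync (procs g x) y \<le> rsync (procs g' x) y"
  by (induction rule: step.induct) (simp_all add: recv_write_procs)

section \<open>Invariants of the message flow\<close>

definition net_sources_below :: "nat \<Rightarrow> 'v gstate \<Rightarrow> bool" where
  "net_sources_below n g = (\<forall>x \<in># net g. fst (snd (snd x)) < n)"

lemma net_sources_below_step:
  assumes "step n t w g g'" "w < n" "net_sources_below n g"
  shows "net_sources_below n g'"
  using assms
proof (induction rule: step.induct)
  case (recv_write_step i g m tg j v)
  then show ?case
    unfolding net_sources_below_def by (auto dest!: recv_write_net_cases in_diffD)
qed (auto simp: net_sources_below_def dest: in_diffD)

definition is_rtag :: "tag \<Rightarrow> bool" where
  "is_rtag tg = (case tg of RTag _ _ \<Rightarrow> True | WTag _ \<Rightarrow> False)"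

lemma is_rtag_simps [simp]: "is_rtag (RTag i r)" "\<not> is_rtag (WTag k)"
  by (simp_all add: is_rtag_def)

definition reads_rtagged :: "'v gstate \<Rightarrow> bool" where
  "reads_rtagged g =
     ((\<forall>x \<in># net g. fst x = Read \<longrightarrow> is_rtag (fst (snd x))) \<and>
      (\<forall>k. \<forall>x \<in># pend (procs g k). is_rtag (snd (snd x))))"

lemma reads_rtagged_step:
  assumes "step n t w g g'" "reads_rtagged g"
  shows "reads_rtagged g'"
  using assms
proof (induction rule: step.induct)
  case (recv_write_step i g m tg j v)
  then show ?case
    unfolding reads_rtagged_def recv_write_procs by (auto dest!: recv_write_net_cases in_diffD)
qed (auto simp: reads_rtagged_def dest: in_diffD)

section \<open>Messages of a read operation\<close>

definition reads_sent :: "'v gstate \<Rightarrow> tag \<Rightarrow> nat" where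
  "reads_sent g tg = length (filter (\<lambda>(m, tg', s, d). tg' = tg \<and> m = Read) (sent g))"

definition non_reads_sent :: "'v gstate \<Rightarrow> tag \<Rightarrow> nat" where
  "non_reads_sent g tg = length (filter (\<lambda>(m, tg', s, d). tg' = tg \<and> m \<noteq> Read) (sent g))"

definition reads_in_transit :: "'v gstate \<Rightarrow> tag \<Rightarrow> nat" where
  "reads_in_transit g tg = size (filter_mset (\<lambda>(m, tg', s, d). tg' = tg \<and> m = Read) (net g))"

definition pending_reads :: "'v lstate \<Rightarrow> tag \<Rightarrow> nat" where
  "pending_reads l tg = size (filter_mset (\<lambda>(j, sn, tg'). tg' = tg) (pend l))"

definition pending_reads_total :: "nat \<Rightarrow> (nat \<Rightarrow> 'v lstate) \<Rightarrow> tag \<Rightarrow> nat" where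
  "pending_reads_total n p tg = (\<Sum>k<n. pending_reads (p k) tg)"

text \<open>Every non-READ message with a read tag is a PROCEED, and it answers a pending READ
  handler, which was created by consuming a READ message.\<close>
definition replies_bounded :: "nat \<Rightarrow> 'v gstate \<Rightarrow> bool" where
  "replies_bounded n g =
     (\<forall>tg. is_rtag tg \<longrightarrow>
        non_reads_sent g tg + pending_reads_total n (procs g) tg + reads_in_transit g tg
          \<le> reads_sent g tg)"

lemma msgs_of_eq_reads_plus_non_reads: "msgs_of g tg = reads_sent g tg + non_reads_sent g tg"
proof -
  have "length (filter (\<lambda>(m, tg', s, d). tg' = tg) xs)
          = length (filter (\<lambda>(m, tg', s, d). tg' = tg \<and> m = Read) xs)
            + length (filter (\<lambda>(m, tg', s, d). tg' = tg \<and> m \<noteq> Read) xs)"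
    for xs :: "'v netmsg list"
    by (induction xs) auto
  then show ?thesis unfolding msgs_of_def reads_sent_def non_reads_sent_def .
qed

lemma pending_reads_total_upd:
  assumes "i < n"
  shows "pending_reads_total n (p(i := y)) tg + pending_reads (p i) tg
           = pending_reads_total n p tg + pending_reads y tg"
proof -
  have split: "pending_reads_total n q tg
                 = pending_reads (q i) tg + (\<Sum>k \<in> {..<n} - {i}. pending_reads (q k) tg)" for q
    unfolding pending_reads_total_def using assms by (simp add: sum.remove)
  have "(\<Sum>k \<in> {..<n} - {i}. pending_reads ((p(i := y)) k) tg)
          = (\<Sum>k \<in> {..<n} - {i}. pending_reads (p k) tg)"
    by (rule sum.cong) auto
  then show ?thesis using split[of p] split[of "p(i := y)"] by simp
qed

lemma pending_reads_total_same:
  "pend y = pend (p i) \<Longrightarrow> pending_reads_total n (p(i := y)) tg = pending_reads_total n p tg"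
  unfolding pending_reads_total_def pending_reads_def by (rule sum.cong) auto

lemma replies_bounded_append:
  assumes I: "replies_bounded n g"
    and sent: "sent g' = sent g @ new" and net: "net g' = net g + mset new"
    and pend: "pending_reads_total n (procs g') = pending_reads_total n (procs g)"
    and new: "\<forall>x \<in> set new. fst x = Read \<or> \<not> is_rtag (fst (snd x))"
  shows "replies_bounded n g'"
  unfolding replies_bounded_def
proof (intro allI impI)
  fix tg assume R: "is_rtag tg"
  let ?P = "\<lambda>(m, tg', s, d). tg' = tg \<and> m = Read"
  have "filter (\<lambda>(m, tg', s, d). tg' = tg \<and> m \<noteq> Read) new = []"
    using new R by (auto simp: filter_empty_conv)
  moreover have "size (filter_mset ?P (mset new)) = length (filter ?P new)"
    by (metis mset_filter size_mset)
  ultimately show "non_reads_sent g' tg + pending_reads_total n (procs g') tg + reads_in_transit g' tg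
                     \<le> reads_sent g' tg"
    using I R unfolding replies_bounded_def reads_sent_def non_reads_sent_def reads_in_transit_def
      sent net pend
    by auto
qed

lemma replies_bounded_net_diff:
  assumes "replies_bounded n g"
  shows "replies_bounded n (g\<lparr>net := net g - X\<rparr>)"
proof -
  have "reads_in_transit (g\<lparr>net := net g - X\<rparr>) tg \<le> reads_in_transit g tg" for tg
    unfolding reads_in_transit_def by (intro size_mset_mono multiset_filter_mono) simp
  then show ?thesis
    using assms unfolding replies_bounded_def reads_sent_def non_reads_sent_def
    by (fastforce intro: order_trans[rotated])
qed

lemma replies_bounded_recv_read:
  assumes I: "replies_bounded n g" and "i < n" and msg: "(Read, tg, j, i) \<in># net g"
  shows "replies_bounded n (upd_loc i (\<lambda>l. l\<lparr>pend := pend l + {#(j, wsync l i, tg)#}\<rparr>)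
                                 (g\<lparr>net := net g - {#(Read, tg, j, i)#}\<rparr>))"
    (is "replies_bounded n ?g'")
  unfolding replies_bounded_def
proof (intro allI impI)
  fix tg' assume R: "is_rtag tg'"
  let ?l = "procs g i\<lparr>pend := pend (procs g i) + {#(j, wsync (procs g i) i, tg)#}\<rparr>"
  obtain M where M: "net g = add_mset (Read, tg, j, i) M"
    using msg by (metis multi_member_split)
  have "pending_reads_total n (procs ?g') tg' + pending_reads (procs g i) tg'
          = pending_reads_total n (procs g) tg' + pending_reads ?l tg'"
    using pending_reads_total_upd[OF \<open>i < n\<close>] by simp
  moreover have "pending_reads ?l tg' = pending_reads (procs g i) tg' + (if tg = tg' then 1 else 0)"
    by (simp add: pending_reads_def)
  moreover have "reads_in_transit ?g' tg' + (if tg = tg' then 1 else 0) = reads_in_transit g tg'"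
    by (simp add: reads_in_transit_def M)
  moreover have "reads_sent ?g' tg' = reads_sent g tg'" "non_reads_sent ?g' tg' = non_reads_sent g tg'"
    by (simp_all add: reads_sent_def non_reads_sent_def)
  ultimately show "non_reads_sent ?g' tg' + pending_reads_total n (procs ?g') tg'
                     + reads_in_transit ?g' tg' \<le> reads_sent ?g' tg'"
    using I R unfolding replies_bounded_def by fastforce
qed

lemma replies_bounded_read_respond:
  assumes I: "replies_bounded n g" and "i < n" and handler: "(j, sn, tg) \<in># pend (procs g i)"
  shows "replies_bounded n (send Proceed tg i j
                              (upd_loc i (\<lambda>l. l\<lparr>pend := pend l - {#(j, sn, tg)#}\<rparr>) g))"
    (is "replies_bounded n ?g'")
  unfolding replies_bounded_def
proof (intro allI impI)
  fix tg' assume R: "is_rtag tg'"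
  let ?l = "procs g i\<lparr>pend := pend (procs g i) - {#(j, sn, tg)#}\<rparr>"
  obtain P where P: "pend (procs g i) = add_mset (j, sn, tg) P"
    using handler by (metis multi_member_split)
  have "pending_reads_total n (procs ?g') tg' + pending_reads (procs g i) tg'
          = pending_reads_total n (procs g) tg' + pending_reads ?l tg'"
    using pending_reads_total_upd[OF \<open>i < n\<close>] by simp
  moreover have "pending_reads (procs g i) tg' = pending_reads ?l tg' + (if tg = tg' then 1 else 0)"
    by (simp add: pending_reads_def P)
  moreover have "non_reads_sent ?g' tg' = non_reads_sent g tg' + (if tg = tg' then 1 else 0)"
    by (simp add: non_reads_sent_def)
  moreover have "reads_in_transit ?g' tg' = reads_in_transit g tg'" "reads_sent ?g' tg' = reads_sent g tg'"
    by (simp_all add: reads_in_transit_def reads_sent_def)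
  ultimately show "non_reads_sent ?g' tg' + pending_reads_total n (procs ?g') tg'
                     + reads_in_transit ?g' tg' \<le> reads_sent ?g' tg'"
    using I R unfolding replies_bounded_def by fastforce
qed

lemma replies_bounded_step:
  assumes "step n t w g g'" "replies_bounded n g"
  shows "replies_bounded n g'"
  using assms
proof (induction rule: step.induct)
  case (write_invoke g wsn g' v)
  show ?case
    by (rule replies_bounded_append[OF write_invoke.prems,
          where new = "map (\<lambda>d. (wmsg wsn v, WTag wsn, w, d))
                         (filter (\<lambda>j. wsync (procs g' w) j = wsn - 1) [0..<n])"])
       (auto simp: write_invoke pending_reads_total_same)
next
  case (read_invoke i g rsn)
  show ?case
    by (rule replies_bounded_append[OF read_invoke.prems,
          where new = "map (\<lambda>d. (Read, RTag i rsn, i, d)) (filter (\<lambda>j. j \<noteq> i) [0..<n])"])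
       (auto simp: pending_reads_total_same)
next
  case (recv_write_step i g m tg j v)
  let ?g0 = "g\<lparr>net := net g - {#(m, tg, j, i)#}\<rparr>"
  have pend: "pending_reads_total n (procs (recv_write n i j v ?g0))
                = pending_reads_total n (procs ?g0)"
    unfolding pending_reads_total_def pending_reads_def by (simp add: recv_write_procs)
  show ?case
    by (rule replies_bounded_append[OF replies_bounded_net_diff[OF recv_write_step.prems]
          recv_write_sent recv_write_net pend])
       (auto dest: write_forwards_shape)
next
  case (recv_read i g tg j)
  then show ?case by (intro replies_bounded_recv_read)
next
  case (read_respond i g j sn tg)
  then show ?case by (intro replies_bounded_read_respond)
next
  case (recv_proceed i g tg j)
  then show ?case
    using replies_bounded_net_diff[OF recv_proceed.prems]
    unfolding replies_bounded_def reads_sent_def non_reads_sent_def reads_in_transit_def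
    by (simp add: pending_reads_total_same)
qed (simp_all add: replies_bounded_def reads_sent_def non_reads_sent_def reads_in_transit_def
       pending_reads_total_same)

definition reads_fresh_bounded :: "nat \<Rightarrow> 'v gstate \<Rightarrow> bool" where
  "reads_fresh_bounded n g =
     (\<forall>a b. reads_sent g (RTag a b) \<le> n \<and>
            (0 < reads_sent g (RTag a b) \<longrightarrow> b \<le> rsync (procs g a) a))"

lemma reads_fresh_bounded_append:
  assumes I: "reads_fresh_bounded n g"
    and mono: "\<And>x y. rsync (procs g x) y \<le> rsync (procs g' x) y"
    and sent: "sent g' = sent g @ new" and new: "\<forall>x \<in> set new. fst x \<noteq> Read"
  shows "reads_fresh_bounded n g'"
proof -
  have "filter (\<lambda>(m, tg', s, d). tg' = tg \<and> m = Read) new = []" for tg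
    using new by (auto simp: filter_empty_conv)
  then have "reads_sent g' tg = reads_sent g tg" for tg
    unfolding reads_sent_def sent by simp
  then show ?thesis using I mono unfolding reads_fresh_bounded_def by (metis le_trans)
qed

lemma reads_fresh_bounded_read_invoke:
  assumes I: "reads_fresh_bounded n g" and rsn: "rsn = rsync (procs g i) i + 1"
  defines "g' \<equiv> send_all Read (RTag i rsn) i (filter (\<lambda>j. j \<noteq> i) [0..<n])
                   (upd_loc i (\<lambda>l. l\<lparr>rsync := (rsync l)(i := rsn), phase := RWait1 rsn\<rparr>) g)"
  shows "reads_fresh_bounded n g'"
  unfolding reads_fresh_bounded_def
proof (intro allI)
  fix a b
  have sent_new: "reads_sent g' tg = reads_sent g tg
      + (if tg = RTag i rsn then length (filter (\<lambda>j. j \<noteq> i) [0..<n]) else 0)" for tg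
  proof -
    have "length (filter (\<lambda>(m, tg', s, d). tg' = tg \<and> m = Read)
            (map (\<lambda>d. (Read, RTag i rsn, i, d)) xs))
          = (if tg = RTag i rsn then length xs else 0)" for xs :: "nat list"
      by (induction xs) auto
    then show ?thesis by (simp add: g'_def reads_sent_def)
  qed
  show "reads_sent g' (RTag a b) \<le> n \<and>
        (0 < reads_sent g' (RTag a b) \<longrightarrow> b \<le> rsync (procs g' a) a)"
  proof (cases "RTag a b = RTag i rsn")
    case True
    have "reads_sent g (RTag i rsn) = 0"
      using I rsn unfolding reads_fresh_bounded_def by fastforce
    moreover have "length (filter (\<lambda>j. j \<noteq> i) [0..<n]) \<le> n"
      using length_filter_le[of _ "[0..<n]"] by simp
    moreover have "rsync (procs g' i) i = rsn" by (simp add: g'_def)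
    ultimately show ?thesis using True sent_new[of "RTag a b"] by simp
  next
    case False
    then have "reads_sent g' (RTag a b) = reads_sent g (RTag a b)"
      using sent_new[of "RTag a b"] by auto
    moreover have "rsync (procs g a) a \<le> rsync (procs g' a) a"
      using rsn by (simp add: g'_def)
    moreover have "reads_sent g (RTag a b) \<le> n \<and>
        (0 < reads_sent g (RTag a b) \<longrightarrow> b \<le> rsync (procs g a) a)"
      using I unfolding reads_fresh_bounded_def by blast
    ultimately show ?thesis by auto
  qed
qed

lemma reads_fresh_bounded_step:
  assumes step: "step n t w g g'" and I: "reads_fresh_bounded n g"
  shows "reads_fresh_bounded n g'"
proof -
  have mono: "rsync (procs g x) y \<le> rsync (procs g' x) y" for x y
    using step_sync_mono[OF step] by blast
  from step show ?thesis
  proof cases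
    case (read_invoke i rsn)
    then show ?thesis using reads_fresh_bounded_read_invoke[OF I] by simp
  next
    case (write_invoke wsn g'' v)
    then show ?thesis by (intro reads_fresh_bounded_append[OF I mono]) auto
  next
    case (recv_write_step i m tg j v)
    then show ?thesis
      by (intro reads_fresh_bounded_append[OF I mono,
            where new = "write_forwards n i j v (procs g i)"])
         (auto simp: recv_write_sent dest: write_forwards_shape)
  next
    case (read_respond i j sn tg)
    then show ?thesis by (intro reads_fresh_bounded_append[OF I mono]) auto
  qed (rule reads_fresh_bounded_append[OF I mono, of "[]"]; simp)+
qed

section \<open>Messages of a write operation\<close>

definition tag_count :: "tag \<Rightarrow> 'v netmsg list \<Rightarrow> nat" where
  "tag_count tg xs = length (filter (\<lambda>(m, tg', s, d). tg' = tg) xs)"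

lemma tag_count_map [simp]:
  "tag_count tg (map (\<lambda>d. (m, tg', s, d)) xs) = (if tg' = tg then length xs else 0)"
  by (induction xs) (auto simp: tag_count_def)

lemma msgs_of_append: "sent g' = sent g @ new \<Longrightarrow> msgs_of g' tg = msgs_of g tg + tag_count tg new"
  by (simp add: msgs_of_def tag_count_def)

definition own_sync_reached :: "nat \<Rightarrow> 'v gstate \<Rightarrow> nat \<Rightarrow> nat set" where
  "own_sync_reached n g k = {x. x < n \<and> k \<le> wsync (procs g x) x}"

definition peer_sync_reached :: "nat \<Rightarrow> 'v gstate \<Rightarrow> nat \<Rightarrow> (nat \<times> nat) set" where
  "peer_sync_reached n g k = {(x, y). x < n \<and> y < n \<and> k \<le> Suc (wsync (procs g x) y)}"

definition write_msgs_bounded :: "nat \<Rightarrow> 'v gstate \<Rightarrow> bool" where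
  "write_msgs_bounded n g =
     (\<forall>k. msgs_of g (WTag k) \<le> n * card (own_sync_reached n g k) + card (peer_sync_reached n g k))"

lemma finite_peer_sync_reached: "finite (peer_sync_reached n g k)"
  by (rule finite_subset[of _ "{..<n} \<times> {..<n}"]) (auto simp: peer_sync_reached_def)

lemma card_Suc_le_if_not_subset: "finite B \<Longrightarrow> A \<subseteq> B \<Longrightarrow> \<not> B \<subseteq> A \<Longrightarrow> card A + 1 \<le> card B"
  by (simp add: Suc_leI psubset_card_mono psubset_eq)

definition write_msgs_paid :: "nat \<Rightarrow> 'v gstate \<Rightarrow> 'v gstate \<Rightarrow> 'v netmsg list \<Rightarrow> nat \<Rightarrow> bool"
  where
  "write_msgs_paid n g g' new k =
     (tag_count (WTag k) new = 0
      \<or> tag_count (WTag k) new \<le> n \<and> \<not> own_sync_reached n g' k \<subseteq> own_sync_reached n g k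
      \<or> tag_count (WTag k) new \<le> 1 \<and> \<not> peer_sync_reached n g' k \<subseteq> peer_sync_reached n g k)"

lemma write_msgs_bounded_extend:
  assumes I: "write_msgs_bounded n g"
    and mono: "\<And>x y. wsync (procs g x) y \<le> wsync (procs g' x) y"
    and sent: "sent g' = sent g @ new"
    and paid: "\<And>k. write_msgs_paid n g g' new k"
  shows "write_msgs_bounded n g'"
  unfolding write_msgs_bounded_def
proof
  fix k
  let ?O = "own_sync_reached n" and ?P = "peer_sync_reached n"
  have sub_own: "?O g k \<subseteq> ?O g' k" and sub_peer: "?P g k \<subseteq> ?P g' k"
    using mono by (auto simp: own_sync_reached_def peer_sync_reached_def intro: order_trans)
  have fin_own: "finite (?O g' k)" by (simp add: own_sync_reached_def)
  have card_own: "n * card (?O g k) \<le> n * card (?O g' k)"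
    using card_mono[OF fin_own sub_own] by simp
  have card_peer: "card (?P g k) \<le> card (?P g' k)"
    using card_mono[OF finite_peer_sync_reached sub_peer] .
  have count: "msgs_of g' (WTag k) = msgs_of g (WTag k) + tag_count (WTag k) new"
    using msgs_of_append[OF sent] .
  have old: "msgs_of g (WTag k) \<le> n * card (?O g k) + card (?P g k)"
    using I by (simp add: write_msgs_bounded_def)
  from paid[of k, unfolded write_msgs_paid_def] show "msgs_of g' (WTag k) \<le> n * card (?O g' k) + card (?P g' k)"
  proof (elim disjE conjE)
    assume "tag_count (WTag k) new = 0"
    then show ?thesis using count old card_own card_peer by linarith
  next
    assume "tag_count (WTag k) new \<le> n" "\<not> ?O g' k \<subseteq> ?O g k"
    moreover have "n * (card (?O g k) + 1) \<le> n * card (?O g' k)"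
      using mult_le_mono2[OF card_Suc_le_if_not_subset[OF fin_own sub_own calculation(2)]] .
    ultimately show ?thesis using count old card_peer by (simp add: algebra_simps)
  next
    assume "tag_count (WTag k) new \<le> 1" "\<not> ?P g' k \<subseteq> ?P g k"
    moreover have "card (?P g k) + 1 \<le> card (?P g' k)"
      using card_Suc_le_if_not_subset[OF finite_peer_sync_reached sub_peer] calculation(2) .
    ultimately show ?thesis using count old card_own by linarith
  qed
qed

lemma write_msgs_bounded_recv_write:
  assumes I: "write_msgs_bounded n g" and "i < n" "j < n"
  shows "write_msgs_bounded n (recv_write n i j v g)"
proof (rule write_msgs_bounded_extend[OF I _ recv_write_sent])
  show "wsync (procs g x) y \<le> wsync (procs (recv_write n i j v g) x) y" for x y
    by (auto simp: recv_write_procs)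
  fix k
  let ?g' = "recv_write n i j v g" and ?s = "wsync (procs g i)"
  let ?c = "tag_count (WTag k) (write_forwards n i j v (procs g i))"
  consider (adopt) "?s j = ?s i" | (resend) "?s j \<noteq> ?s i" "?s j + 1 < ?s i"
    | (none) "?s j \<noteq> ?s i" "\<not> ?s j + 1 < ?s i"
    by blast
  then show "write_msgs_paid n g ?g' (write_forwards n i j v (procs g i)) k"
  proof cases
    case adopt
    have "?c \<le> n"
      using adopt length_filter_le[of _ "[0..<n]"] by (simp add: write_forwards_def)
    moreover have "k = ?s j + 1 \<Longrightarrow> i \<in> own_sync_reached n ?g' k - own_sync_reached n g k"
      using adopt \<open>i < n\<close> by (auto simp: own_sync_reached_def recv_write_procs)
    ultimately show ?thesis using adopt by (auto simp: write_msgs_paid_def write_forwards_def)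
  next
    case resend
    have "k = ?s j + 2 \<Longrightarrow> (i, j) \<in> peer_sync_reached n ?g' k - peer_sync_reached n g k"
      using resend assms(2,3) by (auto simp: peer_sync_reached_def recv_write_procs)
    then show ?thesis
      using resend by (auto simp: write_msgs_paid_def write_forwards_def tag_count_def)
  next
    case none
    then show ?thesis by (simp add: write_msgs_paid_def write_forwards_def tag_count_def)
  qed
qed

lemma write_msgs_bounded_step:
  assumes step: "step n t w g g'" and "w < n" and sources: "net_sources_below n g"
    and tagged: "reads_rtagged g" and I: "write_msgs_bounded n g"
  shows "write_msgs_bounded n g'"
proof -
  have mono: "wsync (procs g x) y \<le> wsync (procs g' x) y" for x y
    using step_sync_mono[OF step] by blast
  from step show ?thesis
  proof cases
    case (write_invoke wsn g'' v)
    let ?ds = "filter (\<lambda>j. wsync (procs g'' w) j = wsn - 1) [0..<n]"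
    show ?thesis
    proof (rule write_msgs_bounded_extend[OF I mono])
      show "sent g' = sent g @ map (\<lambda>d. (wmsg wsn v, WTag wsn, w, d)) ?ds"
        using write_invoke by simp
      have "length ?ds \<le> n" using length_filter_le[of _ "[0..<n]"] by simp
      moreover have "w \<in> own_sync_reached n g' wsn - own_sync_reached n g wsn"
        using write_invoke \<open>w < n\<close> by (auto simp: own_sync_reached_def)
      ultimately show "write_msgs_paid n g g' (map (\<lambda>d. (wmsg wsn v, WTag wsn, w, d)) ?ds) k" for k
        by (cases "k = wsn") (auto simp: write_msgs_paid_def)
    qed
  next
    case (read_invoke i rsn)
    then show ?thesis
      by (intro write_msgs_bounded_extend[OF I mono,
            where new = "map (\<lambda>d. (Read, RTag i rsn, i, d)) (filter (\<lambda>j. j \<noteq> i) [0..<n])"])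
         (simp_all add: write_msgs_paid_def)
  next
    case (recv_write_step i m tg j v)
    have "j < n" using sources recv_write_step(4) by (force simp: net_sources_below_def)
    then show ?thesis
      using write_msgs_bounded_recv_write[of n "g\<lparr>net := net g - {#(m, tg, j, i)#}\<rparr>" i j v]
        I recv_write_step(1,2)
      by (simp add: write_msgs_bounded_def msgs_of_def own_sync_reached_def peer_sync_reached_def)
  next
    case (read_respond i j sn tg)
    have "is_rtag tg" using tagged read_respond(4) by (force simp: reads_rtagged_def)
    then show ?thesis using read_respond(1)
      by (intro write_msgs_bounded_extend[OF I mono, where new = "[(Proceed, tg, i, j)]"])
         (auto simp: write_msgs_paid_def tag_count_def)
  qed (rule write_msgs_bounded_extend[OF I mono, where new = "[]"];
       simp add: write_msgs_paid_def tag_count_def)+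
qed

definition msg_invariant :: "nat \<Rightarrow> 'v gstate \<Rightarrow> bool" where
  "msg_invariant n g =
     (net_sources_below n g \<and> reads_rtagged g \<and> replies_bounded n g \<and>
      reads_fresh_bounded n g \<and> write_msgs_bounded n g)"

lemma msg_invariant_init: "msg_invariant n (init v0)"
proof -
  have init: "sent (init v0) = []" "net (init v0) = {#}" "pend (procs (init v0) k) = {#}" for k
    by (simp_all add: init_def init_loc_def)
  then have "pending_reads_total n (procs (init v0)) tg = 0" for tg
    by (simp add: pending_reads_total_def pending_reads_def)
  with init show ?thesis
    by (simp add: msg_invariant_def net_sources_below_def reads_rtagged_def replies_bounded_def
        reads_fresh_bounded_def write_msgs_bounded_def reads_sent_def non_reads_sent_def
        reads_in_transit_def msgs_of_def)
qed

lemma msg_invariant_reachable: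
  assumes "reachable n t w v0 g" "w < n"
  shows "msg_invariant n g"
  using assms(1) unfolding reachable_def
proof (induction rule: rtranclp_induct)
  case base
  show ?case by (rule msg_invariant_init)
next
  case (step g g')
  then show ?case
    using net_sources_below_step[OF step(2) \<open>w < n\<close>] reads_rtagged_step[OF step(2)]
      replies_bounded_step[OF step(2)] reads_fresh_bounded_step[OF step(2)]
      write_msgs_bounded_step[OF step(2) \<open>w < n\<close>]
    unfolding msg_invariant_def by blast
qed

lemma read_msgs_le:
  assumes "reachable n t w v0 g" "w < n"
  shows "msgs_of g (RTag a b) \<le> 2 * n"
proof -
  have inv: "msg_invariant n g" using msg_invariant_reachable[OF assms] .
  have "non_reads_sent g (RTag a b) \<le> reads_sent g (RTag a b)"
    using inv unfolding msg_invariant_def replies_bounded_def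
    by (metis is_rtag_simps(1) le_add1 le_trans)
  moreover have "reads_sent g (RTag a b) \<le> n"
    using inv unfolding msg_invariant_def reads_fresh_bounded_def by blast
  ultimately show ?thesis by (simp add: msgs_of_eq_reads_plus_non_reads)
qed

lemma write_msgs_le:
  assumes "reachable n t w v0 g" "w < n"
  shows "msgs_of g (WTag k) \<le> 2 * n\<^sup>2"
proof -
  have "card (own_sync_reached n g k) \<le> n"
    using card_mono[of "{..<n}" "own_sync_reached n g k"] by (auto simp: own_sync_reached_def)
  then have "n * card (own_sync_reached n g k) \<le> n * n" by (rule mult_le_mono2)
  moreover have "card (peer_sync_reached n g k) \<le> n * n"
    using card_mono[of "{..<n} \<times> {..<n}" "peer_sync_reached n g k"]
    by (auto simp: peer_sync_reached_def card_cartesian_product)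
  moreover have "msgs_of g (WTag k) \<le> n * card (own_sync_reached n g k) + card (peer_sync_reached n g k)"
    using msg_invariant_reachable[OF assms] by (simp add: msg_invariant_def write_msgs_bounded_def)
  ultimately have "msgs_of g (WTag k) \<le> n * n + n * n" by linarith
  then show ?thesis by (simp add: power2_eq_square)
qed

lemma msg_kinds: "(\<exists>v. m = Write0 v) \<or> (\<exists>v. m = Write1 v) \<or> m = Read \<or> m = Proceed"
  by (cases m) auto

theorem theorem2:
  shows "(\<forall>n t w v0 (g :: 'v gstate) m tg s d.
            reachable n t w v0 g \<and> (m, tg, s, d) \<in> set (sent g) \<longrightarrow>
            (\<exists>v. m = Write0 v) \<or> (\<exists>v. m = Write1 v) \<or> m = Read \<or> m = Proceed)
       \<and> (\<exists>C :: nat. \<forall>n t w v0 (g :: 'v gstate).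
            2 * t < n \<and> w < n \<and> reachable n t w v0 g \<longrightarrow>
              (\<forall>i r. msgs_of g (RTag i r) \<le> C * n) \<and>
              (\<forall>k. msgs_of g (WTag k) \<le> C * n\<^sup>2))"
proof (intro conjI)
  show "\<forall>n t w v0 (g :: 'v gstate) m tg s d.
          reachable n t w v0 g \<and> (m, tg, s, d) \<in> set (sent g) \<longrightarrow>
          (\<exists>v. m = Write0 v) \<or> (\<exists>v. m = Write1 v) \<or> m = Read \<or> m = Proceed"
    by (intro allI impI msg_kinds)
  show "\<exists>C :: nat. \<forall>n t w v0 (g :: 'v gstate).
          2 * t < n \<and> w < n \<and> reachable n t w v0 g \<longrightarrow>
            (\<forall>i r. msgs_of g (RTag i r) \<le> C * n) \<and> (\<forall>k. msgs_of g (WTag k) \<le> C * n\<^sup>2)"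
  proof (intro exI[of _ 2] allI impI conjI)
    fix n t w v0 i r k and g :: "'v gstate"
    assume "2 * t < n \<and> w < n \<and> reachable n t w v0 g"
    then have "reachable n t w v0 g" "w < n" by simp_all
    then show "msgs_of g (RTag i r) \<le> 2 * n" "msgs_of g (WTag k) \<le> 2 * n\<^sup>2"
      by (fact read_msgs_le write_msgs_le)+
  qed
qed

end
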